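(* Let $n\ge1$, let $r>0$, and let $\zeta$ be an unordered $n$-tuple of integers $\{\zeta^1,\ldots,\zeta^n\}$ with $\sum_i(\zeta^i)^2=r^2$, having exactly $k\ge1$ non-zero entries. Let $N_\zeta$ be the set of all distinct vectors of the form $(\pm\zeta^{\pi(1)},\ldots,\pm\zeta^{\pi(n)})$, $\pi\in S_n$. For every $\xi\in N_\zeta$ and every $\bar s\in\{1,\ldots,k\}$ let $B(\xi,\bar s)=[\xi_1,\ldots,\xi_n]\in\mathbb{Z}^{n\times n}$ be the matrix whose columns are the vectors $\xi_1,\ldots,\xi_n$ constructed from $\xi$ and $\bar s$ by the following rule (with $i_1<\cdots<i_k$ the indices of the non-zero coordinates of $\xi$ and $j_1<\cdots<j_{n-k}$ those of its zero coordinates): $\xi_1=\xi$; for $p=2,\ldots,k-\bar s+1$, $\xi_p$ is $\xi$ with the sign of coordinate $i_{\bar s-1+p}$ changed; for $p=k-\bar s+2,\ldots,k$, $\xi_p$ is $\xi$ with the sign of coordinate $i_{\bar s-1+p-k}$ changed; for $p=k+1,\ldots,n$, $\xi_p$ is $\xi$ with coordinate $i_{\bar s}$ replaced by $0$ and coordinate $j_{p-k}$ replaced by $\xi^{i_{\bar s}}$. Let $K_\zeta$ denote the family of all matrices $B(\xi,\bar s)$, $\xi\in N_\zeta$, $\bar s\in\{1,\ldots,k\}$ (indexed by the pairs $(\xi,\bar s)$, so that $|K_\zeta|=k|N_\zeta|$). Then every vector $\xi\in N_\zeta$ occurs as a column of exactly $nk$ members of the family $K_\zeta$.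
   Context: Each matrix $B(\xi,\bar s)$ is viewed as generating the lattice $B\mathbb{Z}^n$; "occurs as a column of exactly $nk$ members" counts members of the indexed family $K_\zeta$. *)

theory Defs
  imports Complex_Main "HOL-Combinatorics.Permutations"
begin

text \<open>Vectors in Z^n are represented as int lists of length n (0-based positions).\<close>

definition signed_perms :: "int list \<Rightarrow> int list set" where
  "signed_perms \<zeta> = {\<xi>. \<exists>\<pi> sg. \<pi> permutes {..<length \<zeta>} \<and> (\<forall>i. sg i = 1 \<or> sg i = -1) \<and>
       \<xi> = map (\<lambda>i. sg i * \<zeta> ! (\<pi> i)) [0..<length \<zeta>]}"

text \<open>Positions of the non-zero / zero coordinates, in increasing order
  (the paper's i_1<...<i_k is nz_idx xi ! 0, ..., nz_idx xi ! (k-1)).\<close>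
definition nz_idx :: "int list \<Rightarrow> nat list" where
  "nz_idx \<xi> = filter (\<lambda>i. \<xi> ! i \<noteq> 0) [0..<length \<xi>]"

definition z_idx :: "int list \<Rightarrow> nat list" where
  "z_idx \<xi> = filter (\<lambda>i. \<xi> ! i = 0) [0..<length \<xi>]"

definition flip_sign :: "int list \<Rightarrow> nat \<Rightarrow> int list" where
  "flip_sign \<xi> i = \<xi>[i := - (\<xi> ! i)]"

text \<open>Column p (1-based, 1 \<le> p \<le> n) of B(xi, s) (s 1-based, 1 \<le> s \<le> k), with k the
  number of non-zero entries of xi; i_m = nz_idx xi ! (m-1), j_m = z_idx xi ! (m-1).\<close>
definition Bcol :: "int list \<Rightarrow> nat \<Rightarrow> nat \<Rightarrow> int list" where
  "Bcol \<xi> s p =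
     (let k = length (nz_idx \<xi>); ii = (\<lambda>m. nz_idx \<xi> ! (m - 1)); jj = (\<lambda>m. z_idx \<xi> ! (m - 1)) in
      if p = 1 then \<xi>
      else if 2 \<le> p \<and> p \<le> k - s + 1 then flip_sign \<xi> (ii (s - 1 + p))
      else if k - s + 2 \<le> p \<and> p \<le> k then flip_sign \<xi> (ii (s - 1 + p - k))
      else \<xi>[ii s := 0, jj (p - k) := \<xi> ! (ii s)])"

end

theory Submission imports Defs begin

text \<open>Read the columns of B(\<eta>, s) backwards: \<xi> is a column of B(\<eta>, s) exactly when \<eta> = \<xi>
  (k choices of s), or \<eta> is \<xi> with the sign of a non-zero coordinate a flipped and s is any of
  the k - 1 indices with i_s \<noteq> a, or \<eta> arises from \<xi> by moving a non-zero entry to a zero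
  coordinate i, in which case s is forced by i_s = i (k (n - k) choices).
  Hence \<xi> lies in k + k (k - 1) + k (n - k) = n k members of the family.\<close>

definition move_entry :: "int list \<Rightarrow> nat \<Rightarrow> nat \<Rightarrow> int list" where
  "move_entry \<eta> i j = \<eta>[i := 0, j := \<eta> ! i]"

lemma set_nz_idx: "set (nz_idx \<eta>) = {i. i < length \<eta> \<and> \<eta> ! i \<noteq> 0}"
  unfolding nz_idx_def by auto

lemma distinct_nz_idx: "distinct (nz_idx \<eta>)"
  unfolding nz_idx_def by simp

lemma length_nz_idx: "length (nz_idx \<eta>) = card {i. i < length \<eta> \<and> \<eta> ! i \<noteq> 0}"
  by (metis distinct_card distinct_nz_idx set_nz_idx)

lemma length_nz_idx_le: "length (nz_idx \<eta>) \<le> length \<eta>"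
  unfolding nz_idx_def by (metis diff_zero length_filter_le length_upt)

lemma set_z_idx: "set (z_idx \<eta>) = {i. i < length \<eta> \<and> \<eta> ! i = 0}"
  unfolding z_idx_def by auto

lemma distinct_z_idx: "distinct (z_idx \<eta>)"
  unfolding z_idx_def by simp

lemma length_z_idx: "length (z_idx \<eta>) = length \<eta> - length (nz_idx \<eta>)"
  unfolding z_idx_def nz_idx_def
  using sum_length_filter_compl[of "\<lambda>i. \<eta> ! i \<noteq> 0" "[0..<length \<eta>]"] by simp

lemma card_filter_permutes:
  assumes "\<pi> permutes {..<n}"
  shows "card {i. i < n \<and> P (\<pi> i)} = card {i. i < n \<and> P i}"
proof -
  have "\<pi> ` {i. i < n \<and> P (\<pi> i)} = {i. i < n \<and> P i}"
    using permutes_image[OF assms] by (force simp: permutes_in_image[OF assms])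
  moreover have "inj_on \<pi> {i. i < n \<and> P (\<pi> i)}"
    using permutes_inj[OF assms] by (rule inj_on_subset) simp
  ultimately show ?thesis by (metis card_image)
qed

lemma card_nth_eq_distinct:
  assumes "distinct xs" "x \<in> set xs"
  shows "card {s \<in> {1..length xs}. xs ! (s - 1) = x} = 1"
proof -
  obtain q where q: "q < length xs" "xs ! q = x" using assms(2) by (auto simp: in_set_conv_nth)
  have "{s \<in> {1..length xs}. xs ! (s - 1) = x} = {Suc q}"
    using q nth_eq_iff_index_eq[OF assms(1)] by force
  then show ?thesis by simp
qed

lemma length_flip_sign [simp]: "length (flip_sign \<eta> a) = length \<eta>"
  unfolding flip_sign_def by simp

lemma nth_flip_sign:
  "t < length \<eta> \<Longrightarrow> flip_sign \<eta> a ! t = (if t = a then - (\<eta> ! t) else \<eta> ! t)"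
  unfolding flip_sign_def by simp

lemma flip_sign_flip_sign [simp]: "flip_sign (flip_sign \<eta> a) a = \<eta>"
  unfolding flip_sign_def by (cases "a < length \<eta>") (auto simp: list_update_beyond)

lemma nz_idx_flip_sign [simp]: "nz_idx (flip_sign \<eta> a) = nz_idx \<eta>"
  unfolding nz_idx_def by (auto simp: nth_flip_sign split: if_splits intro!: filter_cong)

lemma flip_sign_neq:
  assumes "a < length \<eta>" "\<eta> ! a \<noteq> 0"
  shows "flip_sign \<eta> a \<noteq> \<eta>"
proof
  assume "flip_sign \<eta> a = \<eta>"
  then have "- (\<eta> ! a) = \<eta> ! a" using nth_flip_sign[OF assms(1), of a] by simp
  with assms(2) show False by simp
qed

lemma flip_sign_inj:
  assumes "a < length \<eta>" "\<eta> ! a \<noteq> 0" "flip_sign \<eta> a = flip_sign \<eta> b"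
  shows "a = b"
proof (rule ccontr)
  assume "a \<noteq> b"
  then have "flip_sign \<eta> b ! a = \<eta> ! a" by (simp add: assms(1) nth_flip_sign)
  moreover have "flip_sign \<eta> a ! a = - (\<eta> ! a)" by (simp add: assms(1) nth_flip_sign)
  ultimately show False using assms(2,3) by simp
qed

lemma length_move_entry [simp]: "length (move_entry \<eta> i j) = length \<eta>"
  unfolding move_entry_def by simp

lemma nth_move_entry:
  assumes "i < length \<eta>" "i \<noteq> j" "t < length \<eta>"
  shows "move_entry \<eta> i j ! t = (if t = j then \<eta> ! i else if t = i then 0 else \<eta> ! t)"
  using assms unfolding move_entry_def by (auto simp: nth_list_update)

lemma move_entry_move_entry:
  assumes "i < length \<eta>" "j < length \<eta>" "i \<noteq> j" "\<eta> ! j = 0"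
  shows "move_entry (move_entry \<eta> i j) j i = \<eta>"
  using assms by (intro nth_equalityI) (auto simp: nth_move_entry)

lemma move_entry_eq_transpose:
  assumes "i < length \<eta>" "j < length \<eta>" "\<eta> ! j = 0"
  shows "move_entry \<eta> i j = map (\<lambda>t. \<eta> ! transpose i j t) [0..<length \<eta>]"
  using assms unfolding move_entry_def
  by (intro nth_equalityI) (auto simp: nth_list_update transpose_def)

lemma length_nz_idx_move_entry:
  assumes "i < length \<eta>" "j < length \<eta>" "\<eta> ! j = 0"
  shows "length (nz_idx (move_entry \<eta> i j)) = length (nz_idx \<eta>)"
proof -
  have "transpose i j permutes {..<length \<eta>}" using assms(1,2) by (simp add: permutes_swap_id)
  moreover have "{t. t < length \<eta> \<and> move_entry \<eta> i j ! t \<noteq> 0}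
      = {t. t < length \<eta> \<and> \<eta> ! transpose i j t \<noteq> 0}"
    by (auto simp: move_entry_eq_transpose[OF assms])
  ultimately show ?thesis
    unfolding length_nz_idx using card_filter_permutes[of _ _ "\<lambda>t. \<eta> ! t \<noteq> 0"] by simp
qed

lemma move_entry_inverse_iff:
  assumes i: "i < length \<eta>" "\<eta> ! i \<noteq> 0"
  shows "(\<exists>j\<in>set (z_idx \<eta>). \<xi> = move_entry \<eta> i j) \<longleftrightarrow>
    (\<exists>j\<in>set (nz_idx \<xi>). i \<in> set (z_idx \<xi>) \<and> \<eta> = move_entry \<xi> j i)"
proof
  assume "\<exists>j\<in>set (z_idx \<eta>). \<xi> = move_entry \<eta> i j"
  then obtain j where j: "j < length \<eta>" "\<eta> ! j = 0" and \<xi>: "\<xi> = move_entry \<eta> i j"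
    by (auto simp: set_z_idx)
  have "i \<noteq> j" using i j by auto
  then have "j \<in> set (nz_idx \<xi>)" "i \<in> set (z_idx \<xi>)"
    using i j unfolding \<xi> by (auto simp: set_nz_idx set_z_idx nth_move_entry)
  moreover have "\<eta> = move_entry \<xi> j i"
    unfolding \<xi> using i j \<open>i \<noteq> j\<close> by (simp add: move_entry_move_entry)
  ultimately show "\<exists>j\<in>set (nz_idx \<xi>). i \<in> set (z_idx \<xi>) \<and> \<eta> = move_entry \<xi> j i"
    by blast
next
  assume "\<exists>j\<in>set (nz_idx \<xi>). i \<in> set (z_idx \<xi>) \<and> \<eta> = move_entry \<xi> j i"
  then obtain j where j: "j < length \<xi>" "\<xi> ! j \<noteq> 0" and "i < length \<xi>" "\<xi> ! i = 0"
    and \<eta>: "\<eta> = move_entry \<xi> j i"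
    by (auto simp: set_nz_idx set_z_idx)
  moreover have "i \<noteq> j" using j \<open>\<xi> ! i = 0\<close> by auto
  ultimately have "j \<in> set (z_idx \<eta>)" and "move_entry \<eta> i j = \<xi>"
    by (simp_all add: set_z_idx nth_move_entry move_entry_move_entry)
  then show "\<exists>j\<in>set (z_idx \<eta>). \<xi> = move_entry \<eta> i j" by auto
qed

lemma move_entry_inj:
  assumes ji: "j < length \<xi>" "i < length \<xi>" "\<xi> ! j \<noteq> 0" "\<xi> ! i = 0"
    and ji': "j' < length \<xi>" "i' < length \<xi>" "\<xi> ! j' \<noteq> 0" "\<xi> ! i' = 0"
    and eq: "move_entry \<xi> j i = move_entry \<xi> j' i'"
  shows "j = j' \<and> i = i'"
proof -
  have neq: "j \<noteq> i" "j' \<noteq> i'" "j \<noteq> i'" "j' \<noteq> i" using ji ji' by auto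
  have "j = j'"
  proof (rule ccontr)
    assume "j \<noteq> j'"
    then have "move_entry \<xi> j' i' ! j = \<xi> ! j" using ji(1) ji'(1) neq by (simp add: nth_move_entry)
    moreover have "move_entry \<xi> j i ! j = 0" using ji(1) neq by (simp add: nth_move_entry)
    ultimately show False using ji(3) eq by metis
  qed
  moreover have "i = i'"
  proof (rule ccontr)
    assume "i \<noteq> i'"
    then have "move_entry \<xi> j i' ! i = 0" using ji neq by (simp add: nth_move_entry)
    moreover have "move_entry \<xi> j i ! i = \<xi> ! j" using ji(1,2) neq by (simp add: nth_move_entry)
    ultimately show False using ji(3) eq \<open>j = j'\<close> by metis
  qed
  ultimately show ?thesis ..
qed

lemma signed_perms_length: "\<eta> \<in> signed_perms \<zeta> \<Longrightarrow> length \<eta> = length \<zeta>"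
  unfolding signed_perms_def by auto

lemma signed_perms_permute:
  assumes "\<eta> \<in> signed_perms \<zeta>" "\<tau> permutes {..<length \<eta>}"
  shows "map (\<lambda>t. \<eta> ! \<tau> t) [0..<length \<eta>] \<in> signed_perms \<zeta>"
proof -
  obtain \<pi> sg where \<pi>: "\<pi> permutes {..<length \<zeta>}" and sg: "\<forall>i. sg i = 1 \<or> sg i = -1"
    and \<eta>: "\<eta> = map (\<lambda>i. sg i * \<zeta> ! \<pi> i) [0..<length \<zeta>]"
    using assms(1) unfolding signed_perms_def by auto
  have \<tau>: "\<tau> permutes {..<length \<zeta>}" using assms(2) \<eta> by simp
  have "map (\<lambda>t. \<eta> ! \<tau> t) [0..<length \<eta>] = map (\<lambda>i. (sg \<circ> \<tau>) i * \<zeta> ! (\<pi> \<circ> \<tau>) i) [0..<length \<zeta>]"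
    using \<eta> permutes_in_image[OF \<tau>] by (auto intro!: nth_equalityI)
  moreover have "\<pi> \<circ> \<tau> permutes {..<length \<zeta>}" by (rule permutes_compose[OF \<tau> \<pi>])
  moreover have "\<forall>i. (sg \<circ> \<tau>) i = 1 \<or> (sg \<circ> \<tau>) i = -1" using sg by simp
  ultimately show ?thesis unfolding signed_perms_def by blast
qed

lemma signed_perms_flip_sign:
  assumes "\<eta> \<in> signed_perms \<zeta>"
  shows "flip_sign \<eta> a \<in> signed_perms \<zeta>"
proof -
  obtain \<pi> sg where \<pi>: "\<pi> permutes {..<length \<zeta>}" and sg: "\<forall>i. sg i = 1 \<or> sg i = -1"
    and \<eta>: "\<eta> = map (\<lambda>i. sg i * \<zeta> ! \<pi> i) [0..<length \<zeta>]"
    using assms unfolding signed_perms_def by auto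
  have "\<forall>i. (sg(a := - sg a)) i = 1 \<or> (sg(a := - sg a)) i = -1" using sg by auto
  moreover have "flip_sign \<eta> a = map (\<lambda>i. (sg(a := - sg a)) i * \<zeta> ! \<pi> i) [0..<length \<zeta>]"
    using \<eta> unfolding flip_sign_def by (auto intro!: nth_equalityI simp: nth_list_update)
  ultimately show ?thesis using \<pi> unfolding signed_perms_def by blast
qed

lemma signed_perms_move_entry:
  assumes "\<eta> \<in> signed_perms \<zeta>" "i < length \<eta>" "j < length \<eta>" "\<eta> ! j = 0"
  shows "move_entry \<eta> i j \<in> signed_perms \<zeta>"
proof -
  have "transpose i j permutes {..<length \<eta>}" using assms(2,3) by (simp add: permutes_swap_id)
  from signed_perms_permute[OF assms(1) this] show ?thesis
    by (simp only: move_entry_eq_transpose[OF assms(2-4)])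
qed

lemma length_nz_idx_signed_perms:
  assumes "\<eta> \<in> signed_perms \<zeta>"
  shows "length (nz_idx \<eta>) = length (nz_idx \<zeta>)"
proof -
  obtain \<pi> sg where \<pi>: "\<pi> permutes {..<length \<zeta>}" and sg: "\<forall>i. sg i = 1 \<or> sg i = -1"
    and \<eta>: "\<eta> = map (\<lambda>i. sg i * \<zeta> ! \<pi> i) [0..<length \<zeta>]"
    using assms unfolding signed_perms_def by auto
  have "\<eta> ! i \<noteq> 0 \<longleftrightarrow> \<zeta> ! \<pi> i \<noteq> 0" if "i < length \<zeta>" for i
    using sg[rule_format, of i] \<eta> that by auto
  moreover have "length \<eta> = length \<zeta>" using \<eta> by simp
  ultimately have "{i. i < length \<eta> \<and> \<eta> ! i \<noteq> 0} = {i. i < length \<zeta> \<and> \<zeta> ! \<pi> i \<noteq> 0}"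
    by auto
  then show ?thesis
    unfolding length_nz_idx using card_filter_permutes[OF \<pi>, of "\<lambda>i. \<zeta> ! i \<noteq> 0"] by simp
qed

lemma Bcol_image:
  assumes "s \<in> {1..length (nz_idx \<eta>)}"
  shows "Bcol \<eta> s ` {1..length \<eta>} =
    {\<eta>} \<union> flip_sign \<eta> ` (set (nz_idx \<eta>) - {nz_idx \<eta> ! (s - 1)})
        \<union> move_entry \<eta> (nz_idx \<eta> ! (s - 1)) ` set (z_idx \<eta>)"
    (is "_ = {\<eta>} \<union> ?flips \<union> ?moves")
proof -
  define k where "k = length (nz_idx \<eta>)"
  define xs where "xs = nz_idx \<eta>"
  have s: "1 \<le> s" "s \<le> k" using assms k_def by auto
  have kn: "k \<le> length \<eta>" unfolding k_def by (rule length_nz_idx_le)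
  have Bcol_cases: "Bcol \<eta> s p =
      (if p = 1 then \<eta>
       else if 2 \<le> p \<and> p \<le> k - s + 1 then flip_sign \<eta> (xs ! (s + p - 2))
       else if k - s + 2 \<le> p \<and> p \<le> k then flip_sign \<eta> (xs ! (s + p - k - 2))
       else move_entry \<eta> (xs ! (s - 1)) (z_idx \<eta> ! (p - k - 1)))" for p
    using s unfolding Bcol_def Let_def move_entry_def k_def xs_def
    by (auto simp: diff_diff_add numeral_2_eq_2)
  have flip_col: "flip_sign \<eta> (xs ! m) \<in> Bcol \<eta> s ` {1..length \<eta>}"
    if "m < k" "m \<noteq> s - 1" for m
  proof (cases "s \<le> m")
    case True
    then show ?thesis using that s kn by (intro image_eqI[of _ _ "m + 2 - s"]) (auto simp: Bcol_cases)
  next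
    case False
    then show ?thesis using that s kn by (intro image_eqI[of _ _ "m + k + 2 - s"]) (auto simp: Bcol_cases)
  qed
  have move_col: "move_entry \<eta> (xs ! (s - 1)) (z_idx \<eta> ! q) \<in> Bcol \<eta> s ` {1..length \<eta>}"
    if "q < length (z_idx \<eta>)" for q
    using that s kn by (intro image_eqI[of _ _ "k + 1 + q"]) (auto simp: Bcol_cases length_z_idx k_def)
  show ?thesis
  proof (intro equalityI subsetI)
    fix c assume "c \<in> Bcol \<eta> s ` {1..length \<eta>}"
    then obtain p where p: "p \<in> {1..length \<eta>}" and c: "c = Bcol \<eta> s p" by blast
    have "s + p - 2 < k \<and> xs ! (s + p - 2) \<noteq> xs ! (s - 1)" if "2 \<le> p" "p \<le> k - s + 1"
      using that s distinct_nz_idx[of \<eta>] by (auto simp: nth_eq_iff_index_eq k_def xs_def)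
    moreover have "s + p - k - 2 < k \<and> xs ! (s + p - k - 2) \<noteq> xs ! (s - 1)"
      if "k - s + 2 \<le> p" "p \<le> k" for p
      using that s distinct_nz_idx[of \<eta>] by (auto simp: nth_eq_iff_index_eq k_def xs_def)
    moreover have "p - k - 1 < length (z_idx \<eta>)" if "\<not> p \<le> k"
      using that p by (auto simp: length_z_idx k_def)
    ultimately show "c \<in> {\<eta>} \<union> ?flips \<union> ?moves"
      unfolding c Bcol_cases using p by (auto simp: k_def xs_def)
  next
    fix c assume "c \<in> {\<eta>} \<union> ?flips \<union> ?moves"
    then consider "c = \<eta>"
      | a where "a \<in> set xs" "a \<noteq> xs ! (s - 1)" "c = flip_sign \<eta> a"
      | j where "j \<in> set (z_idx \<eta>)" "c = move_entry \<eta> (xs ! (s - 1)) j"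
      unfolding xs_def by blast
    then show "c \<in> Bcol \<eta> s ` {1..length \<eta>}"
    proof cases
      case 1
      then show ?thesis using s kn by (intro image_eqI[of _ _ 1]) (auto simp: Bcol_cases)
    next
      case (2 a)
      then obtain m where "m < k" "a = xs ! m" by (auto simp: in_set_conv_nth k_def xs_def)
      with 2 flip_col show ?thesis by blast
    next
      case (3 j)
      then obtain q where "q < length (z_idx \<eta>)" "j = z_idx \<eta> ! q" by (auto simp: in_set_conv_nth)
      with 3 move_col show ?thesis by blast
    qed
  qed
qed

lemma mem_Bcol_columns_iff:
  assumes "s \<in> {1..length (nz_idx \<eta>)}"
  shows "(\<exists>p\<in>{1..length \<eta>}. Bcol \<eta> s p = \<xi>) \<longleftrightarrow>
    \<eta> = \<xi> \<or> (\<exists>a\<in>set (nz_idx \<xi>) - {nz_idx \<xi> ! (s - 1)}. \<eta> = flip_sign \<xi> a)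
      \<or> (\<exists>j\<in>set (nz_idx \<xi>). \<exists>i\<in>set (z_idx \<xi>). \<eta> = move_entry \<xi> j i \<and> nz_idx \<eta> ! (s - 1) = i)"
proof -
  define i where "i = nz_idx \<eta> ! (s - 1)"
  have "i \<in> set (nz_idx \<eta>)" unfolding i_def using assms by (intro nth_mem) auto
  then have i: "i < length \<eta>" "\<eta> ! i \<noteq> 0" by (auto simp: set_nz_idx)
  have flips: "(\<exists>a\<in>set (nz_idx \<eta>) - {i}. \<xi> = flip_sign \<eta> a) \<longleftrightarrow>
      (\<exists>a\<in>set (nz_idx \<xi>) - {nz_idx \<xi> ! (s - 1)}. \<eta> = flip_sign \<xi> a)"
  proof
    assume "\<exists>a\<in>set (nz_idx \<eta>) - {i}. \<xi> = flip_sign \<eta> a"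
    then obtain a where "a \<in> set (nz_idx \<eta>) - {i}" "\<xi> = flip_sign \<eta> a" by blast
    then show "\<exists>a\<in>set (nz_idx \<xi>) - {nz_idx \<xi> ! (s - 1)}. \<eta> = flip_sign \<xi> a"
      by (intro bexI[of _ a]) (simp_all add: i_def)
  next
    assume "\<exists>a\<in>set (nz_idx \<xi>) - {nz_idx \<xi> ! (s - 1)}. \<eta> = flip_sign \<xi> a"
    then obtain a where "a \<in> set (nz_idx \<xi>) - {nz_idx \<xi> ! (s - 1)}" "\<eta> = flip_sign \<xi> a" by blast
    then show "\<exists>a\<in>set (nz_idx \<eta>) - {i}. \<xi> = flip_sign \<eta> a"
      by (intro bexI[of _ a]) (simp_all add: i_def)
  qed
  have moves: "(\<exists>j\<in>set (z_idx \<eta>). \<xi> = move_entry \<eta> i j) \<longleftrightarrow>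
      (\<exists>j\<in>set (nz_idx \<xi>). i \<in> set (z_idx \<xi>) \<and> \<eta> = move_entry \<xi> j i)"
    using i by (rule move_entry_inverse_iff)
  have "(\<exists>p\<in>{1..length \<eta>}. Bcol \<eta> s p = \<xi>) \<longleftrightarrow> \<xi> \<in> Bcol \<eta> s ` {1..length \<eta>}"
    by (metis image_iff)
  also have "\<dots> \<longleftrightarrow> \<eta> = \<xi> \<or> (\<exists>a\<in>set (nz_idx \<eta>) - {i}. \<xi> = flip_sign \<eta> a)
      \<or> (\<exists>j\<in>set (z_idx \<eta>). \<xi> = move_entry \<eta> i j)"
    unfolding Bcol_image[OF assms] i_def by blast
  finally have columns: "(\<exists>p\<in>{1..length \<eta>}. Bcol \<eta> s p = \<xi>) \<longleftrightarrow> \<eta> = \<xi>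
      \<or> (\<exists>a\<in>set (nz_idx \<eta>) - {i}. \<xi> = flip_sign \<eta> a) \<or> (\<exists>j\<in>set (z_idx \<eta>). \<xi> = move_entry \<eta> i j)" .
  have "(\<exists>j\<in>set (nz_idx \<xi>). i \<in> set (z_idx \<xi>) \<and> \<eta> = move_entry \<xi> j i) \<longleftrightarrow>
      (\<exists>j\<in>set (nz_idx \<xi>). \<exists>i'\<in>set (z_idx \<xi>). \<eta> = move_entry \<xi> j i' \<and> i = i')"
    by blast
  with columns flips moves show ?thesis unfolding i_def by blast
qed

text \<open>The pairs (\<eta>, s) for which \<xi> is a sign-flip column, respectively a moved-entry column,
  of B(\<eta>, s).\<close>

definition flip_pairs :: "int list \<Rightarrow> (int list \<times> nat) set" where
  "flip_pairs \<xi> = (\<lambda>(s, a). (flip_sign \<xi> a, s)) `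
     (SIGMA s:{1..length (nz_idx \<xi>)}. set (nz_idx \<xi>) - {nz_idx \<xi> ! (s - 1)})"

definition move_pairs :: "int list \<Rightarrow> (int list \<times> nat) set" where
  "move_pairs \<xi> = (\<Union>(j, i) \<in> set (nz_idx \<xi>) \<times> set (z_idx \<xi>).
     {move_entry \<xi> j i} \<times> {s \<in> {1..length (nz_idx \<xi>)}. nz_idx (move_entry \<xi> j i) ! (s - 1) = i})"

lemma card_flip_pairs: "card (flip_pairs \<xi>) = length (nz_idx \<xi>) * (length (nz_idx \<xi>) - 1)"
proof -
  define k where "k = length (nz_idx \<xi>)"
  have "inj_on (\<lambda>(s, a). (flip_sign \<xi> a, s)) (SIGMA s:{1..k}. set (nz_idx \<xi>) - {nz_idx \<xi> ! (s - 1)})"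
    by (rule inj_onI) (auto simp: set_nz_idx dest: flip_sign_inj)
  moreover have "card (set (nz_idx \<xi>) - {nz_idx \<xi> ! (s - 1)}) = k - 1" if "s \<in> {1..k}" for s
  proof -
    have "nz_idx \<xi> ! (s - 1) \<in> set (nz_idx \<xi>)" using that by (intro nth_mem) (auto simp: k_def)
    then show ?thesis by (simp add: k_def card_Diff_singleton distinct_card[OF distinct_nz_idx])
  qed
  ultimately show ?thesis
    unfolding flip_pairs_def k_def[symmetric] by (simp add: card_image)
qed

lemma card_move_pairs:
  "card (move_pairs \<xi>) = length (nz_idx \<xi>) * (length \<xi> - length (nz_idx \<xi>))"
proof -
  define k where "k = length (nz_idx \<xi>)"
  define P where "P = set (nz_idx \<xi>) \<times> set (z_idx \<xi>)"
  define F where "F = (\<lambda>(j, i). {move_entry \<xi> j i} \<times> {s \<in> {1..k}. nz_idx (move_entry \<xi> j i) ! (s - 1) = i})"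
  have entries: "j < length \<xi>" "i < length \<xi>" "\<xi> ! j \<noteq> 0" "\<xi> ! i = 0" if "(j, i) \<in> P" for j i
    using that by (auto simp: P_def set_nz_idx set_z_idx)
  have fiber: "card (F (j, i)) = 1" if "(j, i) \<in> P" for j i
  proof -
    have "i \<noteq> j" using entries[OF that] by auto
    then have "length (nz_idx (move_entry \<xi> j i)) = k" "i \<in> set (nz_idx (move_entry \<xi> j i))"
      using entries[OF that] by (auto simp: k_def length_nz_idx_move_entry set_nz_idx nth_move_entry)
    then show ?thesis
      using card_nth_eq_distinct[OF distinct_nz_idx, of i "move_entry \<xi> j i"]
      by (simp add: F_def card_cartesian_product)
  qed
  have disjoint: "F (j, i) \<inter> F (j', i') = {}"
    if "(j, i) \<in> P" "(j', i') \<in> P" "(j, i) \<noteq> (j', i')" for j i j' i'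
  proof -
    have "move_entry \<xi> j i \<noteq> move_entry \<xi> j' i'"
      using move_entry_inj[OF entries[OF that(1)] entries[OF that(2)]] that(3) by auto
    then show ?thesis by (auto simp: F_def)
  qed
  have "card (\<Union>(F ` P)) = (\<Sum>p\<in>P. card (F p))"
    using disjoint by (intro card_UN_disjoint) (auto simp: P_def F_def)
  also have "\<dots> = (\<Sum>p\<in>P. 1)"
    using fiber by (intro sum.cong) auto
  also have "\<dots> = card P" by simp
  also have "\<Union>(F ` P) = move_pairs \<xi>"
    unfolding move_pairs_def P_def F_def k_def ..
  finally have "card (move_pairs \<xi>) = card P" by simp
  then show ?thesis
    by (simp add: P_def k_def card_cartesian_product distinct_card distinct_nz_idx distinct_z_idx length_z_idx)
qed

lemma pairs_with_column_eq:
  assumes \<xi>: "\<xi> \<in> signed_perms \<zeta>"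
  shows "{(\<eta>, s). \<eta> \<in> signed_perms \<zeta> \<and> s \<in> {1..length (nz_idx \<zeta>)} \<and> (\<exists>p\<in>{1..length \<zeta>}. Bcol \<eta> s p = \<xi>)}
    = {\<xi>} \<times> {1..length (nz_idx \<xi>)} \<union> flip_pairs \<xi> \<union> move_pairs \<xi>"
proof -
  define k where "k = length (nz_idx \<xi>)"
  have k: "length (nz_idx \<zeta>) = k" using length_nz_idx_signed_perms[OF \<xi>] by (simp add: k_def)
  have flip_mem: "(\<eta>, s) \<in> flip_pairs \<xi> \<longleftrightarrow>
      s \<in> {1..k} \<and> (\<exists>a\<in>set (nz_idx \<xi>) - {nz_idx \<xi> ! (s - 1)}. \<eta> = flip_sign \<xi> a)" for \<eta> s
    unfolding flip_pairs_def k_def by force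
  have move_mem: "(\<eta>, s) \<in> move_pairs \<xi> \<longleftrightarrow>
      s \<in> {1..k} \<and> (\<exists>j\<in>set (nz_idx \<xi>). \<exists>i\<in>set (z_idx \<xi>). \<eta> = move_entry \<xi> j i \<and> nz_idx \<eta> ! (s - 1) = i)"
    for \<eta> s
    unfolding move_pairs_def k_def by force
  have move_in: "move_entry \<xi> j i \<in> signed_perms \<zeta>" if "j \<in> set (nz_idx \<xi>)" "i \<in> set (z_idx \<xi>)" for j i
    using that by (intro signed_perms_move_entry[OF \<xi>]) (auto simp: set_nz_idx set_z_idx)
  have column_iff: "(\<exists>p\<in>{1..length \<zeta>}. Bcol \<eta> s p = \<xi>) \<longleftrightarrow>
      \<eta> = \<xi> \<or> (\<exists>a\<in>set (nz_idx \<xi>) - {nz_idx \<xi> ! (s - 1)}. \<eta> = flip_sign \<xi> a)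
        \<or> (\<exists>j\<in>set (nz_idx \<xi>). \<exists>i\<in>set (z_idx \<xi>). \<eta> = move_entry \<xi> j i \<and> nz_idx \<eta> ! (s - 1) = i)"
    if "\<eta> \<in> signed_perms \<zeta>" "s \<in> {1..k}" for \<eta> s
    using mem_Bcol_columns_iff[of s \<eta> \<xi>] that k
    by (simp add: signed_perms_length length_nz_idx_signed_perms)
  have "(\<eta>, s) \<in> {(\<eta>, s). \<eta> \<in> signed_perms \<zeta> \<and> s \<in> {1..k} \<and> (\<exists>p\<in>{1..length \<zeta>}. Bcol \<eta> s p = \<xi>)}
      \<longleftrightarrow> (\<eta>, s) \<in> {\<xi>} \<times> {1..k} \<union> flip_pairs \<xi> \<union> move_pairs \<xi>" for \<eta> s
  proof (cases "\<eta> \<in> signed_perms \<zeta> \<and> s \<in> {1..k}")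
    case True
    then show ?thesis using column_iff flip_mem move_mem by auto
  next
    case False
    then show ?thesis
      using \<xi> signed_perms_flip_sign[OF \<xi>] move_in
      unfolding Un_iff mem_Sigma_iff flip_mem move_mem by blast
  qed
  then show ?thesis unfolding k k_def by auto
qed

lemma card_pairs_with_column:
  assumes \<xi>: "\<xi> \<in> signed_perms \<zeta>"
  shows "card {(\<eta>, s). \<eta> \<in> signed_perms \<zeta> \<and> s \<in> {1..length (nz_idx \<zeta>)} \<and> (\<exists>p\<in>{1..length \<zeta>}. Bcol \<eta> s p = \<xi>)}
    = length \<zeta> * length (nz_idx \<zeta>)"
proof -
  define k where "k = length (nz_idx \<xi>)"
  define n where "n = length \<xi>"
  have unmoved_nonzero: "\<eta> ! j \<noteq> 0"
    if "(\<eta>, s) \<in> {\<xi>} \<times> {1..k} \<union> flip_pairs \<xi>" "j \<in> set (nz_idx \<xi>)" for \<eta> s j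
    using that by (auto simp: flip_pairs_def set_nz_idx nth_flip_sign split: if_splits)
  have moved_zero: "\<exists>j\<in>set (nz_idx \<xi>). \<eta> ! j = 0" if moved: "(\<eta>, s) \<in> move_pairs \<xi>" for \<eta> s
  proof -
    obtain j i where "j \<in> set (nz_idx \<xi>)" "i \<in> set (z_idx \<xi>)" "\<eta> = move_entry \<xi> j i"
      using moved unfolding move_pairs_def by blast
    moreover from this have "\<eta> ! j = 0" by (auto simp: set_nz_idx set_z_idx move_entry_def nth_list_update)
    ultimately show ?thesis by blast
  qed
  have "{\<xi>} \<times> {1..k} \<inter> flip_pairs \<xi> = {}"
    by (auto simp: flip_pairs_def set_nz_idx dest: flip_sign_neq)
  moreover have "({\<xi>} \<times> {1..k} \<union> flip_pairs \<xi>) \<inter> move_pairs \<xi> = {}"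
    using unmoved_nonzero moved_zero by fast
  moreover have "finite (flip_pairs \<xi>)" "finite (move_pairs \<xi>)"
    by (auto simp: flip_pairs_def move_pairs_def)
  ultimately have "card ({\<xi>} \<times> {1..k} \<union> flip_pairs \<xi> \<union> move_pairs \<xi>) = k + k * (k - 1) + k * (n - k)"
    by (simp add: card_Un_disjoint card_flip_pairs card_move_pairs k_def n_def)
  also have "\<dots> = n * k"
  proof -
    obtain d where "n = k + d" using le_Suc_ex[OF length_nz_idx_le] unfolding k_def n_def by blast
    then show ?thesis by (cases k) (simp_all add: algebra_simps)
  qed
  finally show ?thesis
    using pairs_with_column_eq[OF \<xi>] signed_perms_length[OF \<xi>] length_nz_idx_signed_perms[OF \<xi>]
    by (simp add: k_def n_def)
qed

theorem lemma3p2: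
  fixes \<zeta> \<xi> :: "int list" and n k :: nat and r :: real
  assumes "length \<zeta> = n" and "n \<ge> 1" and "r > 0"
    and "(\<Sum>i<n. real_of_int ((\<zeta> ! i)^2)) = r^2"
    and "k = card {i. i < n \<and> \<zeta> ! i \<noteq> 0}" and "k \<ge> 1"
    and "\<xi> \<in> signed_perms \<zeta>"
  shows "card {(\<eta>, s). \<eta> \<in> signed_perms \<zeta> \<and> s \<in> {1..k} \<and>
                 (\<exists>p\<in>{1..n}. Bcol \<eta> s p = \<xi>)} = n * k"
proof -
  have "k = length (nz_idx \<zeta>)" using assms(1,5) by (simp add: length_nz_idx)
  with assms(1) show ?thesis using card_pairs_with_column[OF assms(7)] by simp
qed

end
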